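(* If $d: t\to_y^* u$ then $t\to_{y\neg gcv}^{k}\to_{ygcv}^{h} u$ where $k$ is the number of $\to_{y\neg gcv}$ steps in $d$ and $h$ is the number of $\to_{ygcv}$ steps in $d$.
   Context: Terms: $t ::= x \mid \lambda x.t \mid t\,u \mid t[x\backslash u]$ ($t[x\backslash u]$ an explicit substitution binding $x$ in $t$; terms up to $\alpha$). Values $v ::= \lambda x.t$. Substitution contexts $S ::= \langle\cdot\rangle\mid S[x\backslash u]$. For a class of contexts $K$, $K\langle\langle t\rangle\rangle$ is plugging without capture of free variables of $t$. Root rules: $S\langle\lambda x.t\rangle u\mapsto_m S\langle t[x\backslash u]\rangle$; $K\langle\langle x\rangle\rangle[x\backslash u]\mapsto_{e_K} K\langle\langle u\rangle\rangle[x\backslash u]$; $t[x\backslash S\langle v\rangle]\mapsto_{gcv} S\langle t\rangle$ if $x\notin\mathrm{fv}(t)$. Answers $a ::= v\mid a[x\backslash a']$; name contexts $N ::= \langle\cdot\rangle\mid N t\mid N[x\backslash t]$; auxiliary contexts $A ::= \langle\cdot\rangle\mid a[x\backslash A]\mid A[x\backslash t]$; silly contexts $Y ::= A\langle N\rangle$. $\to_{ym} := Y\langle\mapsto_m\rangle$; $\to_{yeAY} := A\langle\mapsto_{e_Y}\rangle$; $\to_{yeYN} := Y\langle\mapsto_{e_N}\rangle$; $\to_{ygcv}:=Y\langle\mapsto_{gcv}\rangle$; $\to_{y\neg gcv}:=\to_{ym}\cup\to_{yeAY}\cup\to_{yeYN}$; $\to_y := \to_{y\neg gcv}\cup\to_{ygcv}$.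 *)

theory Defs
  imports Main
begin

text \<open>Terms up to alpha-equivalence, in de Bruijn representation.
  Sub t u represents the explicit substitution t[x\u], where x is index 0 in t.\<close>
datatype trm = Var nat | Lam trm | App trm trm | Sub trm trm

fun lift :: "nat \<Rightarrow> nat \<Rightarrow> trm \<Rightarrow> trm" where
  "lift n k (Var i) = Var (if i < k then i else i + n)"
| "lift n k (Lam t) = Lam (lift n (Suc k) t)"
| "lift n k (App t u) = App (lift n k t) (lift n k u)"
| "lift n k (Sub t u) = Sub (lift n (Suc k) t) (lift n k u)"

fun fvs :: "trm \<Rightarrow> nat set" where
  "fvs (Var i) = {i}"
| "fvs (Lam t) = {i. Suc i \<in> fvs t}"
| "fvs (App t u) = fvs t \<union> fvs u"
| "fvs (Sub t u) = {i. Suc i \<in> fvs t} \<union> fvs u"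

fun is_value :: "trm \<Rightarrow> bool" where
  "is_value (Lam t) = True"
| "is_value _ = False"

datatype ctx = Hole | CLam ctx | CAppL ctx trm | CAppR trm ctx
  | CSubL ctx trm | CSubR trm ctx

text \<open>Plain plugging (may capture).\<close>
fun plug :: "ctx \<Rightarrow> trm \<Rightarrow> trm" where
  "plug Hole t = t"
| "plug (CLam C) t = Lam (plug C t)"
| "plug (CAppL C u) t = App (plug C t) u"
| "plug (CAppR u C) t = App u (plug C t)"
| "plug (CSubL C u) t = Sub (plug C t) u"
| "plug (CSubR u C) t = Sub u (plug C t)"

fun depth :: "ctx \<Rightarrow> nat" where
  "depth Hole = 0"
| "depth (CLam C) = Suc (depth C)"
| "depth (CAppL C u) = depth C"
| "depth (CAppR u C) = depth C"
| "depth (CSubL C u) = Suc (depth C)"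
| "depth (CSubR u C) = depth C"

text \<open>Capture-avoiding plugging K<<t>>: free variables of t refer to the outside of K.\<close>
definition plugnc :: "ctx \<Rightarrow> trm \<Rightarrow> trm" where
  "plugnc K t = plug K (lift (depth K) 0 t)"

fun ccomp :: "ctx \<Rightarrow> ctx \<Rightarrow> ctx" where
  "ccomp Hole D = D"
| "ccomp (CLam C) D = CLam (ccomp C D)"
| "ccomp (CAppL C u) D = CAppL (ccomp C D) u"
| "ccomp (CAppR u C) D = CAppR u (ccomp C D)"
| "ccomp (CSubL C u) D = CSubL (ccomp C D) u"
| "ccomp (CSubR u C) D = CSubR u (ccomp C D)"

inductive is_sctx :: "ctx \<Rightarrow> bool" where
  "is_sctx Hole"
| "is_sctx S \<Longrightarrow> is_sctx (CSubL S u)"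

inductive is_answer :: "trm \<Rightarrow> bool" where
  "is_answer (Lam t)"
| "is_answer a \<Longrightarrow> is_answer a' \<Longrightarrow> is_answer (Sub a a')"

inductive is_nctx :: "ctx \<Rightarrow> bool" where
  "is_nctx Hole"
| "is_nctx N \<Longrightarrow> is_nctx (CAppL N t)"
| "is_nctx N \<Longrightarrow> is_nctx (CSubL N t)"

inductive is_actx :: "ctx \<Rightarrow> bool" where
  "is_actx Hole"
| "is_answer a \<Longrightarrow> is_actx A \<Longrightarrow> is_actx (CSubR a A)"
| "is_actx A \<Longrightarrow> is_actx (CSubL A t)"

definition is_yctx :: "ctx \<Rightarrow> bool" where
  "is_yctx Y \<longleftrightarrow> (\<exists>A N. is_actx A \<and> is_nctx N \<and> Y = ccomp A N)"

definition root_m :: "trm \<Rightarrow> trm \<Rightarrow> bool" where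
  "root_m t u \<longleftrightarrow> (\<exists>S t0 u0. is_sctx S \<and>
      t = App (plug S (Lam t0)) u0 \<and> u = plug S (Sub t0 (lift (depth S) 0 u0)))"

text \<open>K<<x>>[x\u] -> K<<u>>[x\u], for K in the class P.  Inside Sub, x is index 0 and
  u must be lifted by one to pass the binder of the explicit substitution.\<close>
definition root_e :: "(ctx \<Rightarrow> bool) \<Rightarrow> trm \<Rightarrow> trm \<Rightarrow> bool" where
  "root_e P t u \<longleftrightarrow> (\<exists>K u0. P K \<and>
      t = Sub (plugnc K (Var 0)) u0 \<and> u = Sub (plugnc K (lift 1 0 u0)) u0)"

text \<open>t[x\S<v>] -> S<t> if x not free in t.\<close>
definition root_gcv :: "trm \<Rightarrow> trm \<Rightarrow> bool" where
  "root_gcv t u \<longleftrightarrow> (\<exists>S v t1. is_sctx S \<and> is_value v \<and> 0 \<notin> fvs t1 \<and>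
      (\<exists>t0. t1 = lift 1 0 t0 \<and>
        t = Sub t1 (plug S v) \<and> u = plug S (lift (depth S) 0 t0)))"

definition ctx_clos :: "(ctx \<Rightarrow> bool) \<Rightarrow> (trm \<Rightarrow> trm \<Rightarrow> bool) \<Rightarrow> trm \<Rightarrow> trm \<Rightarrow> bool" where
  "ctx_clos P R t u \<longleftrightarrow> (\<exists>C t' u'. P C \<and> R t' u' \<and> t = plug C t' \<and> u = plug C u')"

definition ym :: "trm \<Rightarrow> trm \<Rightarrow> bool" where
  "ym = ctx_clos is_yctx root_m"

definition yeAY :: "trm \<Rightarrow> trm \<Rightarrow> bool" where
  "yeAY = ctx_clos is_actx (root_e is_yctx)"

definition yeYN :: "trm \<Rightarrow> trm \<Rightarrow> bool" where
  "yeYN = ctx_clos is_yctx (root_e is_nctx)"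

definition ygcv :: "trm \<Rightarrow> trm \<Rightarrow> bool" where
  "ygcv = ctx_clos is_yctx root_gcv"

definition ynotgcv :: "trm \<Rightarrow> trm \<Rightarrow> bool" where
  "ynotgcv t u \<longleftrightarrow> ym t u \<or> yeAY t u \<or> yeYN t u"

definition ystep :: "trm \<Rightarrow> trm \<Rightarrow> bool" where
  "ystep t u \<longleftrightarrow> ynotgcv t u \<or> ygcv t u"

text \<open>A derivation d : t ->_y^* u, each step labelled by the sub-relation it uses:
  yder t u k h means there is such a derivation with k ->_{y not gcv} steps and
  h ->_{ygcv} steps.\<close>
inductive yder :: "trm \<Rightarrow> trm \<Rightarrow> nat \<Rightarrow> nat \<Rightarrow> bool" where
  yder_refl: "yder t t 0 0"
| yder_notgcv: "ynotgcv t s \<Longrightarrow> yder s u k h \<Longrightarrow> yder t u (Suc k) h"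
| yder_gcv: "ygcv t s \<Longrightarrow> yder s u k h \<Longrightarrow> yder t u k (Suc h)"

end

theory Submission
  imports Defs
begin

text \<open>A gcv step \<open>t[x\S\<langle>v\<rangle>] \<rightarrow> S\<langle>t\<rangle>\<close> only erases an unused value and extrudes its
  substitution context \<open>S\<close>, whose variables do not occur in \<open>t\<close>. A non-gcv step out of
  \<open>S\<langle>t\<rangle>\<close> therefore acts inside \<open>t\<close>, or inside an argument of \<open>S\<close> (reachable only when
  \<open>t\<close> is an answer), or is a redex that merely passes through \<open>S\<langle>t\<rangle>\<close>: a variable of \<open>t\<close>
  substituted from above, or a multiplicative redex at distance \<open>S\<close>. In every case the
  same step can be fired first on \<open>t[x\S\<langle>v\<rangle>]\<close>, with the answer \<open>v\<close> in the hole of \<open>S\<close>,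
  and be followed by one gcv step. Iterating this swap moves all gcv steps of a derivation
  to its end without changing the number of steps of either kind.\<close>

lemma lift_0 [simp]: "lift 0 k t = t"
  by (induction t arbitrary: k) auto

lemma lift_lift: "lift m k (lift n k t) = lift (m + n) k t"
  by (induction t arbitrary: k) auto

lemma lift_lift_commute: "j \<le> k \<Longrightarrow> lift n (Suc k) (lift 1 j t) = lift 1 j (lift n k t)"
  by (induction t arbitrary: j k) auto

lemma lift_Suc_lift_1 [simp]: "lift n (Suc k) (lift (Suc 0) 0 t) = lift (Suc 0) 0 (lift n k t)"
  using lift_lift_commute[of 0 k n t] by simp

lemma fvs_lift: "i \<in> fvs (lift n k t) \<Longrightarrow> i < k \<or> k + n \<le> i"
  by (induction t arbitrary: k i) (fastforce split: if_splits)+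

definition lift_idx :: "nat \<Rightarrow> nat \<Rightarrow> nat \<Rightarrow> nat" where
  "lift_idx n k i = (if i < k then i else i + n)"

inductive_simps is_answer_simps [simp]:
  "is_answer (Var i)" "is_answer (Lam t)" "is_answer (App t u)" "is_answer (Sub a b)"

lemma is_answer_lift [simp]: "is_answer (lift n k t) = is_answer t"
  by (induction t arbitrary: k) auto

lemma is_answer_value: "is_value v \<Longrightarrow> is_answer v"
  by (cases v) auto

lemma is_answer_plug_sctxD: "is_sctx S \<Longrightarrow> is_answer (plug S t) \<Longrightarrow> is_answer t"
  by (induction rule: is_sctx.induct) auto

lemma is_answer_plug_sctx_replace:
  "is_sctx S \<Longrightarrow> is_answer (plug S t) \<Longrightarrow> is_answer z \<Longrightarrow> is_answer (plug S z)"
  by (induction rule: is_sctx.induct) auto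

datatype ctx_class = Silly | Aux | Name

text \<open>The three grammars in one: \<open>N ::= \<langle>\<cdot>\<rangle> | N t | N[x\t]\<close>,
  \<open>A ::= \<langle>\<cdot>\<rangle> | a[x\A] | A[x\t]\<close>, and, unfolding \<open>Y = A\<langle>N\<rangle>\<close>, \<open>Y ::= N | a[x\Y] | Y[x\t]\<close>.\<close>
fun in_class :: "ctx_class \<Rightarrow> ctx \<Rightarrow> bool" where
  "in_class c Hole = True"
| "in_class c (CSubL C t) = in_class c C"
| "in_class c (CSubR a C) = (c \<noteq> Name \<and> is_answer a \<and> in_class c C)"
| "in_class c (CAppL C t) = (c \<noteq> Aux \<and> in_class Name C)"
| "in_class c (CLam C) = False"
| "in_class c (CAppR t C) = False"

lemma is_nctx_iff_in_class: "is_nctx C \<longleftrightarrow> in_class Name C"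
proof
  show "is_nctx C \<Longrightarrow> in_class Name C" by (induction rule: is_nctx.induct) auto
  show "in_class Name C \<Longrightarrow> is_nctx C" by (induction C) (auto intro: is_nctx.intros)
qed

lemma is_actx_iff_in_class: "is_actx C \<longleftrightarrow> in_class Aux C"
proof
  show "is_actx C \<Longrightarrow> in_class Aux C" by (induction rule: is_actx.induct) auto
  show "in_class Aux C \<Longrightarrow> is_actx C" by (induction C) (auto intro: is_actx.intros)
qed

lemma in_class_Name_Silly: "in_class Name C \<Longrightarrow> in_class Silly C"
  by (induction C) auto

lemma is_yctx_iff_in_class: "is_yctx C \<longleftrightarrow> in_class Silly C"
proof
  assume "is_yctx C"
  then obtain A N where "is_actx A" "is_nctx N" "C = ccomp A N" by (auto simp: is_yctx_def)
  then show "in_class Silly C"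
    by (induction A arbitrary: C rule: is_actx.induct)
      (auto simp: is_nctx_iff_in_class in_class_Name_Silly)
next
  show "in_class Silly C \<Longrightarrow> is_yctx C"
  proof (induction C)
    case Hole
    show ?case unfolding is_yctx_def
      by (intro exI[of _ Hole]) (auto intro: is_actx.intros is_nctx.intros)
  next
    case (CSubL C t)
    then obtain A N where "is_actx A" "is_nctx N" "C = ccomp A N" by (auto simp: is_yctx_def)
    then show ?case unfolding is_yctx_def
      by (intro exI[of _ "CSubL A t"] exI[of _ N]) (auto intro: is_actx.intros)
  next
    case (CSubR a C)
    then obtain A N where "is_actx A" "is_nctx N" "C = ccomp A N" by (auto simp: is_yctx_def)
    with CSubR.prems show ?case unfolding is_yctx_def
      by (intro exI[of _ "CSubR a A"] exI[of _ N]) (auto intro: is_actx.intros)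
  next
    case (CAppL C t)
    then have "is_nctx (CAppL C t)" by (auto simp: is_nctx_iff_in_class)
    then show ?case unfolding is_yctx_def
      by (intro exI[of _ Hole] exI[of _ "CAppL C t"]) (auto intro: is_actx.intros)
  qed auto
qed

inductive cclos :: "(trm \<Rightarrow> trm \<Rightarrow> bool) \<Rightarrow> ctx_class \<Rightarrow> trm \<Rightarrow> trm \<Rightarrow> bool" for R where
  cclos_root: "R t u \<Longrightarrow> cclos R c t u"
| cclos_SubL: "cclos R c t u \<Longrightarrow> cclos R c (Sub t w) (Sub u w)"
| cclos_SubR: "c \<noteq> Name \<Longrightarrow> is_answer a \<Longrightarrow> cclos R c t u \<Longrightarrow> cclos R c (Sub a t) (Sub a u)"
| cclos_AppL: "c \<noteq> Aux \<Longrightarrow> cclos R Name t u \<Longrightarrow> cclos R c (App t w) (App u w)"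

inductive_cases cclos_SubE: "cclos R c (Sub t w) u"
inductive_cases cclos_AppE: "cclos R c (App t w) u"

lemma ctx_clos_in_class: "ctx_clos (in_class c) R = cclos R c"
proof (intro ext iffI)
  fix t u
  assume "ctx_clos (in_class c) R t u"
  then obtain C t' u' where "in_class c C" "R t' u'" "t = plug C t'" "u = plug C u'"
    by (auto simp: ctx_clos_def)
  then show "cclos R c t u"
    by (induction C arbitrary: c t u) (auto intro: cclos.intros)
next
  fix t u
  assume "cclos R c t u"
  then show "ctx_clos (in_class c) R t u"
  proof (induction rule: cclos.induct)
    case (cclos_root t u c)
    then show ?case unfolding ctx_clos_def by (intro exI[of _ Hole]) auto
  next
    case (cclos_SubL c t u w)
    then obtain C t' u' where "in_class c C" "R t' u'" "t = plug C t'" "u = plug C u'"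
      by (auto simp: ctx_clos_def)
    then show ?case unfolding ctx_clos_def by (intro exI[of _ "CSubL C w"]) auto
  next
    case (cclos_SubR c a t u)
    then obtain C t' u' where "in_class c C" "R t' u'" "t = plug C t'" "u = plug C u'"
      by (auto simp: ctx_clos_def)
    with cclos_SubR.hyps show ?case unfolding ctx_clos_def by (intro exI[of _ "CSubR a C"]) auto
  next
    case (cclos_AppL c t u w)
    then obtain C t' u' where "in_class Name C" "R t' u'" "t = plug C t'" "u = plug C u'"
      by (auto simp: ctx_clos_def)
    with cclos_AppL.hyps show ?case unfolding ctx_clos_def by (intro exI[of _ "CAppL C w"]) auto
  qed
qed

inductive beta_dist :: "trm \<Rightarrow> trm \<Rightarrow> trm \<Rightarrow> bool" where
  beta_dist_Lam: "beta_dist (Lam b) w (Sub b w)"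
| beta_dist_Sub: "beta_dist X (lift 1 0 w) Y \<Longrightarrow> beta_dist (Sub X q) w (Sub Y q)"

inductive_cases beta_dist_SubE: "beta_dist (Sub X q) w Y"

lemma beta_dist_iff:
  "beta_dist X w Y \<longleftrightarrow>
    (\<exists>S b. is_sctx S \<and> X = plug S (Lam b) \<and> Y = plug S (Sub b (lift (depth S) 0 w)))"
proof
  show "beta_dist X w Y \<Longrightarrow>
      \<exists>S b. is_sctx S \<and> X = plug S (Lam b) \<and> Y = plug S (Sub b (lift (depth S) 0 w))"
  proof (induction rule: beta_dist.induct)
    case (beta_dist_Lam b w)
    show ?case by (intro exI[of _ Hole]) (auto intro: is_sctx.intros)
  next
    case (beta_dist_Sub X w Y q)
    then obtain S b where "is_sctx S" "X = plug S (Lam b)"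
      "Y = plug S (Sub b (lift (depth S) 0 (lift 1 0 w)))" by blast
    then show ?case
      by (intro exI[of _ "CSubL S q"] exI[of _ b]) (auto intro: is_sctx.intros simp: lift_lift)
  qed
next
  assume "\<exists>S b. is_sctx S \<and> X = plug S (Lam b) \<and> Y = plug S (Sub b (lift (depth S) 0 w))"
  then obtain S b where "is_sctx S" "X = plug S (Lam b)" "Y = plug S (Sub b (lift (depth S) 0 w))"
    by blast
  then show "beta_dist X w Y"
  proof (induction S arbitrary: X Y w rule: is_sctx.induct)
    case 1
    then show ?case by (simp add: beta_dist_Lam)
  next
    case (2 S q)
    have "beta_dist (plug S (Lam b)) (lift 1 0 w) (plug S (Sub b (lift (depth S) 0 (lift 1 0 w))))"
      by (rule "2.IH") simp_all
    with "2.prems" show ?case by (simp add: beta_dist_Sub lift_lift)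
  qed
qed

lemma root_m_iff: "root_m t u \<longleftrightarrow> (\<exists>X w. t = App X w \<and> beta_dist X w u)"
  by (auto simp: root_m_def beta_dist_iff)

inductive replace_var :: "ctx_class \<Rightarrow> nat \<Rightarrow> trm \<Rightarrow> trm \<Rightarrow> trm \<Rightarrow> bool" where
  replace_var_Var: "replace_var c i w (Var i) w"
| replace_var_SubL: "replace_var c (Suc i) (lift 1 0 w) X X' \<Longrightarrow>
    replace_var c i w (Sub X q) (Sub X' q)"
| replace_var_SubR: "c \<noteq> Name \<Longrightarrow> is_answer a \<Longrightarrow> replace_var c i w X X' \<Longrightarrow>
    replace_var c i w (Sub a X) (Sub a X')"
| replace_var_AppL: "c \<noteq> Aux \<Longrightarrow> replace_var Name i w X X' \<Longrightarrow>
    replace_var c i w (App X q) (App X' q)"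

inductive_cases replace_var_SubE: "replace_var c i w (Sub X q) Y"
inductive_cases replace_var_AppE: "replace_var c i w (App X q) Y"

lemma replace_var_iff:
  "replace_var c i w X X' \<longleftrightarrow>
    (\<exists>K. in_class c K \<and> X = plug K (Var (i + depth K)) \<and> X' = plug K (lift (depth K) 0 w))"
proof
  show "replace_var c i w X X' \<Longrightarrow>
      \<exists>K. in_class c K \<and> X = plug K (Var (i + depth K)) \<and> X' = plug K (lift (depth K) 0 w)"
  proof (induction rule: replace_var.induct)
    case (replace_var_Var c i w)
    show ?case by (intro exI[of _ Hole]) auto
  next
    case (replace_var_SubL c i w X X' q)
    then obtain K where "in_class c K" "X = plug K (Var (Suc i + depth K))"
      "X' = plug K (lift (depth K) 0 (lift 1 0 w))" by blast
    then show ?case by (intro exI[of _ "CSubL K q"]) (auto simp: lift_lift)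
  next
    case (replace_var_SubR c a i w X X')
    then show ?case by (metis depth.simps(6) in_class.simps(3) plug.simps(6))
  next
    case (replace_var_AppL c i w X X' q)
    then show ?case by (metis depth.simps(3) in_class.simps(4) plug.simps(3))
  qed
next
  assume "\<exists>K. in_class c K \<and> X = plug K (Var (i + depth K)) \<and> X' = plug K (lift (depth K) 0 w)"
  then obtain K where "in_class c K" "X = plug K (Var (i + depth K))"
    "X' = plug K (lift (depth K) 0 w)" by blast
  then show "replace_var c i w X X'"
  proof (induction K arbitrary: c i w X X')
    case (CSubL K t)
    then have "replace_var c (Suc i) (lift 1 0 w) (plug K (Var (Suc i + depth K)))
        (plug K (lift (depth K) 0 (lift 1 0 w)))"
      by (intro CSubL.IH) auto
    with CSubL.prems show ?case by (auto intro: replace_var_SubL simp: lift_lift)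
  qed (auto intro: replace_var.intros)
qed

lemma root_e_in_class_iff:
  "root_e (in_class c) t u \<longleftrightarrow>
    (\<exists>X X' q. t = Sub X q \<and> u = Sub X' q \<and> replace_var c 0 (lift 1 0 q) X X')"
  by (auto simp: root_e_def replace_var_iff plugnc_def)

lemma root_gcv_iff:
  "root_gcv t u \<longleftrightarrow> (\<exists>t0 S v. is_sctx S \<and> is_value v \<and>
    t = Sub (lift 1 0 t0) (plug S v) \<and> u = plug S (lift (depth S) 0 t0))"
  using fvs_lift[of 0 1 0] by (auto simp: root_gcv_def)

lemma root_gcv_intro:
  "is_sctx S \<Longrightarrow> is_value v \<Longrightarrow> root_gcv (Sub (lift 1 0 t0) (plug S v)) (plug S (lift (depth S) 0 t0))"
  unfolding root_gcv_iff by blast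

datatype step_rule = Mult | Exp ctx_class

fun root_rule :: "step_rule \<Rightarrow> trm \<Rightarrow> trm \<Rightarrow> bool" where
  "root_rule Mult = root_m"
| "root_rule (Exp c) = root_e (in_class c)"

text \<open>An exponential rule of class other than \<open>Name\<close> can reach, through an answer, into the
  substitution context extruded by a gcv step; replaying it then steps inside the argument
  of the gcv redex, which no context below an application may do. Hence such a rule must be
  closed under auxiliary contexts, which never enter applications.\<close>
definition admissible :: "step_rule \<Rightarrow> ctx_class \<Rightarrow> bool" where
  "admissible \<rho> c \<longleftrightarrow> (\<forall>c'. \<rho> = Exp c' \<longrightarrow> c' = Name \<or> c = Aux)"

lemma ynotgcv_iff:
  "ynotgcv t u \<longleftrightarrow> cclos (root_rule Mult) Silly t u \<or> cclos (root_rule (Exp Silly)) Aux t u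
    \<or> cclos (root_rule (Exp Name)) Silly t u"
proof -
  have Y: "is_yctx = in_class Silly" and A: "is_actx = in_class Aux" and N: "is_nctx = in_class Name"
    by (auto simp: is_yctx_iff_in_class is_actx_iff_in_class is_nctx_iff_in_class)
  show ?thesis
    unfolding ynotgcv_def ym_def yeAY_def yeYN_def Y A N ctx_clos_in_class by simp
qed

lemma ygcv_eq: "ygcv = cclos root_gcv Silly"
proof -
  have Y: "is_yctx = in_class Silly" by (auto simp: is_yctx_iff_in_class)
  show ?thesis unfolding ygcv_def Y ctx_clos_in_class ..
qed

section \<open>Steps commute with lifting\<close>

lemma beta_dist_lift: "beta_dist X w Y \<Longrightarrow> beta_dist (lift n k X) (lift n k w) (lift n k Y)"
proof (induction arbitrary: k rule: beta_dist.induct)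
  case (beta_dist_Sub X w Y q)
  then show ?case using beta_dist_Sub.IH[of "Suc k"] by (simp add: beta_dist.beta_dist_Sub)
qed (simp add: beta_dist.beta_dist_Lam)

lemma beta_dist_unlift:
  "beta_dist X' w' Y \<Longrightarrow> X' = lift n k X \<Longrightarrow> w' = lift n k w \<Longrightarrow>
    \<exists>Y0. Y = lift n k Y0 \<and> beta_dist X w Y0"
proof (induction arbitrary: k X w rule: beta_dist.induct)
  case (beta_dist_Lam b w')
  then obtain b0 where "X = Lam b0" "b = lift n (Suc k) b0" by (cases X) auto
  with beta_dist_Lam show ?case by (auto intro!: exI[of _ "Sub b0 w"] beta_dist.beta_dist_Lam)
next
  case (beta_dist_Sub X1 w1 Y q)
  then obtain X0 q0 where X: "X = Sub X0 q0" "X1 = lift n (Suc k) X0" "q = lift n k q0"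
    by (cases X) auto
  have "lift 1 0 w1 = lift n (Suc k) (lift 1 0 w)"
    using beta_dist_Sub by simp
  with beta_dist_Sub.IH[OF X(2)] obtain Y0 where "Y = lift n (Suc k) Y0" "beta_dist X0 (lift 1 0 w) Y0"
    by blast
  with X show ?case by (auto intro!: exI[of _ "Sub Y0 q0"] beta_dist.beta_dist_Sub)
qed

lemma replace_var_lift:
  "replace_var c i w X X' \<Longrightarrow>
    replace_var c (lift_idx n k i) (lift n k w) (lift n k X) (lift n k X')"
proof (induction arbitrary: k rule: replace_var.induct)
  case (replace_var_SubL c i w X X' q)
  have "lift_idx n (Suc k) (Suc i) = Suc (lift_idx n k i)" by (simp add: lift_idx_def)
  with replace_var_SubL.IH[of "Suc k"] show ?case by (simp add: replace_var.replace_var_SubL)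
qed (simp_all add: lift_idx_def replace_var.intros)

lemma replace_var_unlift:
  "replace_var c i w' X' Y \<Longrightarrow> X' = lift n k X \<Longrightarrow> w' = lift n k w \<Longrightarrow>
    \<exists>i0 Y0. i = lift_idx n k i0 \<and> Y = lift n k Y0 \<and> replace_var c i0 w X Y0"
proof (induction arbitrary: k X w rule: replace_var.induct)
  case (replace_var_Var c i w')
  then obtain i0 where "X = Var i0" "i = lift_idx n k i0" by (cases X) (auto simp: lift_idx_def)
  with replace_var_Var show ?case by (auto intro!: exI[of _ i0] replace_var.replace_var_Var)
next
  case (replace_var_SubL c i w1 X1 X1' q)
  then obtain X0 q0 where X: "X = Sub X0 q0" "X1 = lift n (Suc k) X0" "q = lift n k q0"
    by (cases X) auto
  have "lift 1 0 w1 = lift n (Suc k) (lift 1 0 w)" using replace_var_SubL by simp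
  with replace_var_SubL.IH[OF X(2)] obtain i0 Y0 where
    Y: "Suc i = lift_idx n (Suc k) i0" "X1' = lift n (Suc k) Y0"
      "replace_var c i0 (lift 1 0 w) X0 Y0" by blast
  then obtain j where j: "i0 = Suc j" by (cases i0) (auto simp: lift_idx_def)
  with Y have "i = lift_idx n k j" by (auto simp: lift_idx_def split: if_splits)
  with X Y j show ?case by (auto intro!: exI[of _ "Sub Y0 q0"] replace_var.replace_var_SubL)
next
  case (replace_var_SubR c a i w1 X1 X1')
  then obtain a0 X0 where X: "X = Sub a0 X0" "a = lift n (Suc k) a0" "X1 = lift n k X0"
    by (cases X) auto
  with replace_var_SubR.IH[OF X(3) replace_var_SubR.prems(2)] obtain i0 Y0 where
    "i = lift_idx n k i0" "X1' = lift n k Y0" "replace_var c i0 w X0 Y0" by blast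
  with X replace_var_SubR.hyps show ?case
    by (auto intro!: exI[of _ "Sub a0 Y0"] replace_var.replace_var_SubR)
next
  case (replace_var_AppL c i w1 X1 X1' q)
  then obtain X0 q0 where X: "X = App X0 q0" "X1 = lift n k X0" "q = lift n k q0"
    by (cases X) auto
  with replace_var_AppL.IH[OF X(2) replace_var_AppL.prems(2)] obtain i0 Y0 where
    "i = lift_idx n k i0" "X1' = lift n k Y0" "replace_var Name i0 w X0 Y0" by blast
  with X replace_var_AppL.hyps show ?case
    by (auto intro!: exI[of _ "App Y0 q0"] replace_var.replace_var_AppL)
qed

lemma root_rule_lift: "root_rule \<rho> t u \<Longrightarrow> root_rule \<rho> (lift n k t) (lift n k u)"
proof (cases \<rho>)
  case Mult
  assume "root_rule \<rho> t u"
  with Mult show ?thesis by (auto simp: root_m_iff dest: beta_dist_lift)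
next
  case (Exp c)
  assume "root_rule \<rho> t u"
  with Exp obtain X X' q where "t = Sub X q" "u = Sub X' q" "replace_var c 0 (lift 1 0 q) X X'"
    by (auto simp: root_e_in_class_iff)
  moreover from replace_var_lift[OF this(3), of n "Suc k"]
  have "replace_var c 0 (lift 1 0 (lift n k q)) (lift n (Suc k) X) (lift n (Suc k) X')"
    by (simp add: lift_idx_def)
  ultimately show ?thesis using Exp by (auto simp: root_e_in_class_iff)
qed

lemma root_rule_unlift: "root_rule \<rho> (lift n k t) u \<Longrightarrow> \<exists>u0. u = lift n k u0 \<and> root_rule \<rho> t u0"
proof (cases \<rho>)
  case Mult
  assume "root_rule \<rho> (lift n k t) u"
  with Mult obtain X w where "lift n k t = App X w" "beta_dist X w u" by (auto simp: root_m_iff)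
  moreover from this(1) obtain X0 w0 where "t = App X0 w0" "X = lift n k X0" "w = lift n k w0"
    by (cases t) auto
  moreover from beta_dist_unlift[OF calculation(2) this(2,3)]
  obtain Y0 where "u = lift n k Y0" "beta_dist X0 w0 Y0" by blast
  ultimately show ?thesis using Mult by (auto simp: root_m_iff)
next
  case (Exp c)
  assume "root_rule \<rho> (lift n k t) u"
  with Exp obtain X X' q where r: "lift n k t = Sub X q" "u = Sub X' q"
    "replace_var c 0 (lift 1 0 q) X X'" by (auto simp: root_e_in_class_iff)
  then obtain X0 q0 where t: "t = Sub X0 q0" "X = lift n (Suc k) X0" "q = lift n k q0"
    by (cases t) auto
  from replace_var_unlift[OF r(3) t(2), of "lift 1 0 q0"] t(3) obtain i0 Y0 where
    "0 = lift_idx n (Suc k) i0" "X' = lift n (Suc k) Y0" "replace_var c i0 (lift 1 0 q0) X0 Y0"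
    by auto
  moreover from this(1) have "i0 = 0" by (auto simp: lift_idx_def split: if_splits)
  ultimately show ?thesis using r t Exp
    by (intro exI[of _ "Sub Y0 q0"]) (auto simp: root_e_in_class_iff)
qed

lemma cclos_lift:
  "cclos (root_rule \<rho>) c t u \<Longrightarrow> cclos (root_rule \<rho>) c (lift n k t) (lift n k u)"
  by (induction arbitrary: k rule: cclos.induct) (auto intro: cclos.intros root_rule_lift)

lemma cclos_unlift:
  "cclos (root_rule \<rho>) c t' u \<Longrightarrow> t' = lift n k t \<Longrightarrow>
    \<exists>u0. u = lift n k u0 \<and> cclos (root_rule \<rho>) c t u0"
proof (induction arbitrary: k t rule: cclos.induct)
  case (cclos_root t u c)
  then show ?case using root_rule_unlift by (blast intro: cclos.cclos_root)
next
  case (cclos_SubL c t1 u w)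
  then obtain X0 q0 where t: "t = Sub X0 q0" "t1 = lift n (Suc k) X0" "w = lift n k q0"
    by (cases t) auto
  with cclos_SubL.IH obtain Y0 where "u = lift n (Suc k) Y0" "cclos (root_rule \<rho>) c X0 Y0"
    by blast
  with t show ?case by (auto intro!: exI[of _ "Sub Y0 q0"] cclos.cclos_SubL)
next
  case (cclos_SubR c a t1 u)
  then obtain X0 q0 where t: "t = Sub X0 q0" "a = lift n (Suc k) X0" "t1 = lift n k q0"
    by (cases t) auto
  with cclos_SubR.IH obtain Y0 where "u = lift n k Y0" "cclos (root_rule \<rho>) c q0 Y0" by blast
  with t cclos_SubR.hyps show ?case by (auto intro!: exI[of _ "Sub X0 Y0"] cclos.cclos_SubR)
next
  case (cclos_AppL c t1 u w)
  then obtain X0 q0 where t: "t = App X0 q0" "t1 = lift n k X0" "w = lift n k q0"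
    by (cases t) auto
  with cclos_AppL.IH obtain Y0 where "u = lift n k Y0" "cclos (root_rule \<rho>) Name X0 Y0" by blast
  with t cclos_AppL.hyps show ?case by (auto intro!: exI[of _ "App Y0 q0"] cclos.cclos_AppL)
qed

section \<open>Steps out of a substitution context\<close>

lemma replace_var_not_answer: "replace_var c i w a a' \<Longrightarrow> \<not> is_answer a"
  by (induction rule: replace_var.induct) auto

lemma replace_var_fvs: "replace_var c i w X X' \<Longrightarrow> i \<in> fvs X"
  by (induction rule: replace_var.induct) auto

lemma cclos_not_answer: "cclos (root_rule \<rho>) c a u \<Longrightarrow> \<not> is_answer a"
proof (induction rule: cclos.induct)
  case (cclos_root t u c)
  then show ?case
    by (cases \<rho>) (auto simp: root_m_iff root_e_in_class_iff dest: replace_var_not_answer)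
qed auto

lemma cclos_Sub_answerE:
  assumes "is_answer a" "cclos (root_rule \<rho>) c (Sub a s) u"
  obtains s' where "u = Sub a s'" "c \<noteq> Name" "cclos (root_rule \<rho>) c s s'"
proof -
  from assms(2) consider
      (root) "root_rule \<rho> (Sub a s) u"
    | (left) a' where "cclos (root_rule \<rho>) c a a'"
    | (right) s' where "u = Sub a s'" "c \<noteq> Name" "cclos (root_rule \<rho>) c s s'"
    by (elim cclos_SubE) auto
  then show ?thesis
  proof cases
    case root
    with assms(1) show ?thesis
      by (cases \<rho>) (auto simp: root_m_iff root_e_in_class_iff dest: replace_var_not_answer)
  next
    case left
    with assms(1) show ?thesis by (auto dest: cclos_not_answer)
  qed (rule that)
qed

lemma cclos_gcv_answer_backward: "cclos root_gcv c t s \<Longrightarrow> is_answer s \<Longrightarrow> is_answer t"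
proof (induction rule: cclos.induct)
  case (cclos_root t u c)
  then obtain t0 S v where S: "is_sctx S" "is_value v" and "t = Sub (lift 1 0 t0) (plug S v)"
    and u: "is_answer (plug S (lift (depth S) 0 t0))" by (auto simp: root_gcv_iff)
  moreover from S u have "is_answer (plug S v)"
    by (blast intro: is_answer_plug_sctx_replace is_answer_value)
  moreover from S u have "is_answer t0" by (auto dest: is_answer_plug_sctxD)
  ultimately show ?case by simp
qed auto

text \<open>Uniformity in the hole lets the step be replayed with the value of a gcv redex in
  place of the term that the gcv step extruded.\<close>
definition sctx_step :: "(trm \<Rightarrow> trm \<Rightarrow> bool) \<Rightarrow> ctx \<Rightarrow> ctx \<Rightarrow> bool" where
  "sctx_step R S S' \<longleftrightarrow>
    is_sctx S' \<and> depth S' = depth S \<and> (\<forall>z. is_answer z \<longrightarrow> R (plug S z) (plug S' z))"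

lemma sctx_step_SubL:
  "sctx_step R S S' \<Longrightarrow> (\<And>a b. R a b \<Longrightarrow> R' (Sub a q) (Sub b q)) \<Longrightarrow>
    sctx_step R' (CSubL S q) (CSubL S' q)"
  by (auto simp: sctx_step_def intro: is_sctx.intros)

lemma sctx_step_SubR:
  "is_sctx S \<Longrightarrow> is_answer (plug S t) \<Longrightarrow> (\<And>a. is_answer a \<Longrightarrow> R (Sub a q) (Sub a q')) \<Longrightarrow>
    sctx_step R (CSubL S q) (CSubL S q')"
  by (auto simp: sctx_step_def intro: is_sctx.intros is_answer_plug_sctx_replace)

lemma replace_var_plug_sctx:
  "is_sctx S \<Longrightarrow> replace_var c i w (plug S T) X' \<Longrightarrow>
    (\<exists>T'. X' = plug S T' \<and> replace_var c (i + depth S) (lift (depth S) 0 w) T T') \<or>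
    (c \<noteq> Name \<and> is_answer T \<and> (\<exists>S'. X' = plug S' T \<and> sctx_step (replace_var c i w) S S'))"
proof (induction arbitrary: i w X' rule: is_sctx.induct)
  case (2 S q)
  from "2.prems" consider
      (left) X1 where "X' = Sub X1 q" "replace_var c (Suc i) (lift 1 0 w) (plug S T) X1"
    | (right) X1 where "X' = Sub (plug S T) X1" "c \<noteq> Name" "is_answer (plug S T)"
        "replace_var c i w q X1"
    by (auto elim: replace_var_SubE)
  then show ?case
  proof cases
    case (left X1)
    from "2.IH"[OF left(2)] show ?thesis
    proof (elim disjE exE conjE)
      fix T'
      assume "X1 = plug S T'" "replace_var c (Suc i + depth S) (lift (depth S) 0 (lift 1 0 w)) T T'"
      with left(1) show ?thesis by (auto simp: lift_lift)
    next
      fix S'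
      assume "c \<noteq> Name" "is_answer T" "X1 = plug S' T"
        "sctx_step (replace_var c (Suc i) (lift 1 0 w)) S S'"
      with left(1) show ?thesis
        by (auto intro!: exI[of _ "CSubL S' q"] sctx_step_SubL replace_var_SubL)
    qed
  next
    case (right X1)
    then show ?thesis using "2.hyps" is_answer_plug_sctxD
      by (auto intro!: exI[of _ "CSubL S X1"] sctx_step_SubR replace_var_SubR)
  qed
qed simp

lemma root_rule_Sub_plug_sctx:
  assumes "is_sctx S" "root_rule \<rho> (Sub (plug S T) q) u" "depth S \<notin> fvs T"
  obtains c S' where "\<rho> = Exp c" "c \<noteq> Name" "is_answer T" "u = Sub (plug S' T) q"
    "sctx_step (replace_var c 0 (lift 1 0 q)) S S'"
proof (cases \<rho>)
  case Mult
  with assms(2) show ?thesis by (simp add: root_m_iff)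
next
  case (Exp c)
  with assms(2) obtain X' where "u = Sub X' q" "replace_var c 0 (lift 1 0 q) (plug S T) X'"
    by (auto simp: root_e_in_class_iff)
  with replace_var_plug_sctx[OF assms(1)] assms(3) that Exp show ?thesis
    by (fastforce dest: replace_var_fvs)
qed

lemma cclos_plug_sctx:
  "is_sctx S \<Longrightarrow> cclos (root_rule \<rho>) c (plug S T) u \<Longrightarrow> \<forall>i<depth S. i \<notin> fvs T \<Longrightarrow>
    admissible \<rho> c \<Longrightarrow>
    (\<exists>T'. u = plug S T' \<and> cclos (root_rule \<rho>) c T T') \<or>
    (c \<noteq> Name \<and> is_answer T \<and>
      (\<exists>S'. u = plug S' T \<and> sctx_step (cclos (root_rule \<rho>) c) S S'))"
proof (induction arbitrary: u rule: is_sctx.induct)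
  case (2 S q)
  let ?R = "cclos (root_rule \<rho>) c"
  from "2.prems"(1) consider
      (root) "root_rule \<rho> (Sub (plug S T) q) u"
    | (left) X1 where "u = Sub X1 q" "?R (plug S T) X1"
    | (right) X1 where "u = Sub (plug S T) X1" "c \<noteq> Name" "is_answer (plug S T)" "?R q X1"
    by (auto elim: cclos_SubE)
  then show ?case
  proof cases
    case root
    from "2.prems"(2) have "depth S \<notin> fvs T" by simp
    with root_rule_Sub_plug_sctx[OF "2.hyps" root] obtain c' S' where
      "\<rho> = Exp c'" "c' \<noteq> Name" "is_answer T" "u = Sub (plug S' T) q"
      "sctx_step (replace_var c' 0 (lift 1 0 q)) S S'" by blast
    moreover from this(1,2) "2.prems"(3) have "c \<noteq> Name" by (auto simp: admissible_def)
    ultimately show ?thesis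
      by (auto intro!: exI[of _ "CSubL S' q"] sctx_step_SubL cclos_root
          simp: root_e_in_class_iff)
  next
    case (left X1)
    from "2.prems"(2) have "\<forall>i<depth S. i \<notin> fvs T" by simp
    from "2.IH"[OF left(2) this "2.prems"(3)] left(1) show ?thesis
      by (auto intro!: exI[of _ "CSubL _ q"] sctx_step_SubL cclos_SubL)
  next
    case (right X1)
    then show ?thesis using "2.hyps" is_answer_plug_sctxD
      by (auto intro!: exI[of _ "CSubL S X1"] sctx_step_SubR cclos_SubR)
  qed
qed simp

lemma beta_dist_plug_sctx:
  "is_sctx S \<Longrightarrow> beta_dist (plug S T) w Y \<Longrightarrow> \<exists>Z. beta_dist T (lift (depth S) 0 w) Z \<and> Y = plug S Z"
proof (induction arbitrary: w Y rule: is_sctx.induct)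
  case (2 S q)
  from "2.prems" obtain Y1 where "Y = Sub Y1 q" "beta_dist (plug S T) (lift 1 0 w) Y1"
    by (auto elim: beta_dist_SubE)
  moreover from "2.IH"[OF this(2)] obtain Z where
    "beta_dist T (lift (depth S) 0 (lift 1 0 w)) Z" "Y1 = plug S Z" by blast
  ultimately show ?case by (auto simp: lift_lift)
qed simp

section \<open>Postponing one gcv step\<close>

lemma root_gcv_then_replace_var:
  assumes "root_gcv t s" "replace_var c i w s s'"
  shows "\<exists>t'. replace_var c i w t t' \<and> root_gcv t' s'"
proof -
  from assms(1) obtain t0 S v where S: "is_sctx S" "is_value v"
    and t: "t = Sub (lift 1 0 t0) (plug S v)" and s: "s = plug S (lift (depth S) 0 t0)"
    by (auto simp: root_gcv_iff)
  from replace_var_plug_sctx[OF S(1) assms(2)[unfolded s]] show ?thesis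
  proof (elim disjE exE conjE)
    fix T'
    assume s': "s' = plug S T'"
      and r: "replace_var c (i + depth S) (lift (depth S) 0 w) (lift (depth S) 0 t0) T'"
    from replace_var_unlift[OF r refl refl] obtain Y0 where
      T': "T' = lift (depth S) 0 Y0" and "replace_var c i w t0 Y0"
      by (auto simp: lift_idx_def)
    from replace_var_lift[OF this(2), of 1 0]
    have "replace_var c i w t (Sub (lift 1 0 Y0) (plug S v))"
      unfolding t by (simp add: lift_idx_def replace_var_SubL)
    moreover have "root_gcv (Sub (lift 1 0 Y0) (plug S v)) s'"
      unfolding s' T' using S by (rule root_gcv_intro)
    ultimately show ?thesis by blast
  next
    fix S'
    assume "c \<noteq> Name" "is_answer (lift (depth S) 0 t0)" "s' = plug S' (lift (depth S) 0 t0)"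
      "sctx_step (replace_var c i w) S S'"
    with S show ?thesis unfolding t sctx_step_def
      by (metis is_answer_lift is_answer_value replace_var_SubR root_gcv_intro)
  qed
qed

lemma cclos_gcv_then_replace_var:
  "cclos root_gcv c' t s \<Longrightarrow> replace_var c i w s s' \<Longrightarrow>
    \<exists>t'. replace_var c i w t t' \<and> cclos root_gcv c' t' s'"
proof (induction arbitrary: c i w s' rule: cclos.induct)
  case (cclos_root t s c')
  from root_gcv_then_replace_var[OF cclos_root.hyps cclos_root.prems] show ?case
    by (blast intro: cclos.cclos_root)
next
  case (cclos_SubL c' t1 s1 q)
  from cclos_SubL.prems consider
      (left) X1 where "s' = Sub X1 q" "replace_var c (Suc i) (lift 1 0 w) s1 X1"
    | (right) X1 where "s' = Sub s1 X1" "c \<noteq> Name" "is_answer s1" "replace_var c i w q X1"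
    by (auto elim: replace_var_SubE)
  then show ?case
  proof cases
    case (left X1)
    with cclos_SubL.IH show ?thesis by (blast intro: replace_var_SubL cclos.cclos_SubL)
  next
    case (right X1)
    with cclos_gcv_answer_backward[OF cclos_SubL.hyps] cclos_SubL.hyps show ?thesis
      by (blast intro: replace_var_SubR cclos.cclos_SubL)
  qed
next
  case (cclos_SubR c' a t2 s2)
  from cclos_SubR.prems cclos_SubR.hyps(2) obtain X1 where
    "s' = Sub a X1" "c \<noteq> Name" "replace_var c i w s2 X1"
    by (auto elim: replace_var_SubE dest: replace_var_not_answer)
  with cclos_SubR.IH cclos_SubR.hyps show ?case
    by (blast intro: replace_var_SubR cclos.cclos_SubR)
next
  case (cclos_AppL c' t1 s1 q)
  from cclos_AppL.prems obtain X1 where "s' = App X1 q" "c \<noteq> Aux" "replace_var Name i w s1 X1"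
    by (auto elim: replace_var_AppE)
  with cclos_AppL.IH cclos_AppL.hyps show ?case
    by (blast intro: replace_var_AppL cclos.cclos_AppL)
qed

lemma cclos_gcv_then_beta_dist:
  "cclos root_gcv Name t s \<Longrightarrow> beta_dist s w Y \<Longrightarrow>
    \<exists>t'. beta_dist t w t' \<and> (\<forall>c. cclos root_gcv c t' Y)"
proof (induction Name t s arbitrary: w Y rule: cclos.induct)
  case (cclos_root t s)
  then obtain t0 S v where S: "is_sctx S" "is_value v"
    and t: "t = Sub (lift 1 0 t0) (plug S v)" and s: "s = plug S (lift (depth S) 0 t0)"
    by (auto simp: root_gcv_iff)
  from beta_dist_plug_sctx[OF S(1) cclos_root.prems[unfolded s]] obtain Z where
    Z: "beta_dist (lift (depth S) 0 t0) (lift (depth S) 0 w) Z" "Y = plug S Z" by blast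
  from beta_dist_unlift[OF Z(1) refl refl] obtain Z0 where
    Z0: "Z = lift (depth S) 0 Z0" "beta_dist t0 w Z0" by blast
  from beta_dist_lift[OF Z0(2), of 1 0] have "beta_dist t w (Sub (lift 1 0 Z0) (plug S v))"
    unfolding t by (rule beta_dist_Sub)
  moreover have "\<forall>c. cclos root_gcv c (Sub (lift 1 0 Z0) (plug S v)) Y"
    unfolding Z(2) Z0(1) using root_gcv_intro[OF S] by (blast intro: cclos.cclos_root)
  ultimately show ?case by blast
next
  case (cclos_SubL t1 s1 q)
  from cclos_SubL.prems obtain Y1 where "Y = Sub Y1 q" "beta_dist s1 (lift 1 0 w) Y1"
    by (auto elim: beta_dist_SubE)
  with cclos_SubL.hyps show ?case by (blast intro: beta_dist_Sub cclos.cclos_SubL)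
next
  case (cclos_AppL t1 s1 q)
  then show ?case by (auto elim: beta_dist.cases)
qed simp

lemma cclos_gcv_SubL_then_root_rule:
  assumes "cclos root_gcv c t1 s1" "root_rule \<rho> (Sub s1 w) u"
  shows "\<exists>s'. root_rule \<rho> (Sub t1 w) s' \<and> cclos root_gcv c s' u"
proof (cases \<rho>)
  case Mult
  with assms(2) show ?thesis by (simp add: root_m_iff)
next
  case (Exp c')
  with assms(2) obtain X' where u: "u = Sub X' w" and r: "replace_var c' 0 (lift 1 0 w) s1 X'"
    by (auto simp: root_e_in_class_iff)
  from cclos_gcv_then_replace_var[OF assms(1) r] obtain t1' where
    "replace_var c' 0 (lift 1 0 w) t1 t1'" "cclos root_gcv c t1' X'" by blast
  with Exp u show ?thesis by (auto simp: root_e_in_class_iff intro: cclos_SubL)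
qed

lemma cclos_gcv_AppL_then_root_rule:
  assumes "cclos root_gcv Name t1 s1" "root_rule \<rho> (App s1 w) u"
  shows "\<exists>s'. root_rule \<rho> (App t1 w) s' \<and> cclos root_gcv c s' u"
proof (cases \<rho>)
  case Mult
  with assms(2) have "beta_dist s1 w u" by (simp add: root_m_iff)
  from cclos_gcv_then_beta_dist[OF assms(1) this] Mult show ?thesis
    by (auto simp: root_m_iff)
next
  case (Exp c')
  with assms(2) show ?thesis by (simp add: root_e_in_class_iff)
qed

lemma root_gcv_then_step:
  assumes "root_gcv t s" "cclos (root_rule \<rho>) c s u" "admissible \<rho> c"
  shows "\<exists>s'. cclos (root_rule \<rho>) c t s' \<and> root_gcv s' u"
proof -
  from assms(1) obtain t0 S v where S: "is_sctx S" "is_value v"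
    and t: "t = Sub (lift 1 0 t0) (plug S v)" and s: "s = plug S (lift (depth S) 0 t0)"
    by (auto simp: root_gcv_iff)
  have "\<forall>i<depth S. i \<notin> fvs (lift (depth S) 0 t0)" using fvs_lift by fastforce
  from cclos_plug_sctx[OF S(1) assms(2)[unfolded s] this assms(3)] show ?thesis
  proof (elim disjE exE conjE)
    fix T'
    assume u: "u = plug S T'" and r: "cclos (root_rule \<rho>) c (lift (depth S) 0 t0) T'"
    from cclos_unlift[OF r refl] obtain U0 where
      U0: "T' = lift (depth S) 0 U0" "cclos (root_rule \<rho>) c t0 U0" by blast
    from cclos_lift[OF U0(2), of 1 0]
    have "cclos (root_rule \<rho>) c t (Sub (lift 1 0 U0) (plug S v))"
      unfolding t by (rule cclos_SubL)
    moreover have "root_gcv (Sub (lift 1 0 U0) (plug S v)) u"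
      unfolding u U0(1) using S by (rule root_gcv_intro)
    ultimately show ?thesis by blast
  next
    fix S'
    assume "c \<noteq> Name" "is_answer (lift (depth S) 0 t0)" "u = plug S' (lift (depth S) 0 t0)"
      "sctx_step (cclos (root_rule \<rho>) c) S S'"
    with S show ?thesis unfolding t sctx_step_def
      by (metis is_answer_lift is_answer_value cclos_SubR root_gcv_intro)
  qed
qed

lemma cclos_gcv_then_step:
  "cclos root_gcv c t s \<Longrightarrow> cclos (root_rule \<rho>) c' s u \<Longrightarrow> admissible \<rho> c' \<Longrightarrow>
    \<exists>s'. cclos (root_rule \<rho>) c' t s' \<and> cclos root_gcv c s' u"
proof (induction arbitrary: c' u rule: cclos.induct)
  case (cclos_root t s c)
  from root_gcv_then_step[OF cclos_root.hyps cclos_root.prems] show ?case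
    by (blast intro: cclos.cclos_root)
next
  case (cclos_SubL c t1 s1 w)
  from cclos_SubL.prems(1) consider
      (root) "root_rule \<rho> (Sub s1 w) u"
    | (left) X1 where "u = Sub X1 w" "cclos (root_rule \<rho>) c' s1 X1"
    | (right) X1 where "u = Sub s1 X1" "c' \<noteq> Name" "is_answer s1" "cclos (root_rule \<rho>) c' w X1"
    by (elim cclos_SubE) auto
  then show ?case
  proof cases
    case root
    from cclos_gcv_SubL_then_root_rule[OF cclos_SubL.hyps root] show ?thesis
      by (blast intro: cclos.cclos_root)
  next
    case (left X1)
    from cclos_SubL.IH[OF left(2) cclos_SubL.prems(2)] left(1) show ?thesis
      by (blast intro: cclos.cclos_SubL)
  next
    case (right X1)
    with cclos_gcv_answer_backward[OF cclos_SubL.hyps] cclos_SubL.hyps show ?thesis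
      by (blast intro: cclos.cclos_SubR cclos.cclos_SubL)
  qed
next
  case (cclos_SubR c a t2 s2)
  from cclos_SubR.hyps(2) cclos_SubR.prems(1) obtain X1 where
    u: "u = Sub a X1" and c': "c' \<noteq> Name" and step: "cclos (root_rule \<rho>) c' s2 X1"
    by (rule cclos_Sub_answerE)
  from cclos_SubR.IH[OF step cclos_SubR.prems(2)] u c' cclos_SubR.hyps(1,2) show ?case
    by (blast intro: cclos.cclos_SubR)
next
  case (cclos_AppL c t1 s1 w)
  from cclos_AppL.prems(1) consider
      (root) "root_rule \<rho> (App s1 w) u"
    | (left) X1 where "u = App X1 w" "c' \<noteq> Aux" "cclos (root_rule \<rho>) Name s1 X1"
    by (elim cclos_AppE) auto
  then show ?case
  proof cases
    case root
    from cclos_gcv_AppL_then_root_rule[OF cclos_AppL.hyps(2) root] show ?thesis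
      by (blast intro: cclos.cclos_root)
  next
    case (left X1)
    with cclos_AppL.prems(2) have "admissible \<rho> Name" by (auto simp: admissible_def)
    from cclos_AppL.IH[OF left(3) this] left(1,2) cclos_AppL.hyps(1) show ?thesis
      by (blast intro: cclos.cclos_AppL)
  qed
qed

section \<open>Postponing all gcv steps\<close>

lemma ygcv_then_ynotgcv: "ygcv t s \<Longrightarrow> ynotgcv s u \<Longrightarrow> \<exists>s'. ynotgcv t s' \<and> ygcv s' u"
  unfolding ynotgcv_iff ygcv_eq
  by (elim disjE; drule (1) cclos_gcv_then_step; auto simp: admissible_def)

lemma ygcv_then_ynotgcv_relpowp:
  "ygcv t s \<Longrightarrow> (ynotgcv ^^ k) s u \<Longrightarrow> \<exists>s'. (ynotgcv ^^ k) t s' \<and> ygcv s' u"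
proof (induction k arbitrary: t s)
  case (Suc k)
  from relpowp_Suc_D2[OF Suc.prems(2)] obtain s1 where "ynotgcv s s1" "(ynotgcv ^^ k) s1 u"
    by blast
  moreover from ygcv_then_ynotgcv[OF Suc.prems(1) this(1)] obtain t1 where
    "ynotgcv t t1" "ygcv t1 s1" by blast
  moreover from Suc.IH[OF this(2) calculation(2)] obtain s' where
    "(ynotgcv ^^ k) t1 s'" "ygcv s' u" by blast
  ultimately show ?case by (blast intro: relpowp_Suc_I2)
qed simp

theorem proposition11p6:
  assumes "yder t u k h"
  shows "\<exists>s. (ynotgcv ^^ k) t s \<and> (ygcv ^^ h) s u"
  using assms
proof (induction rule: yder.induct)
  case (yder_refl t)
  then show ?case by auto
next
  case (yder_notgcv t s u k h)
  then show ?case by (blast intro: relpowp_Suc_I2)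
next
  case (yder_gcv t s u k h)
  then obtain s1 where "(ynotgcv ^^ k) s s1" "(ygcv ^^ h) s1 u" by blast
  moreover from ygcv_then_ynotgcv_relpowp[OF yder_gcv(1) this(1)] obtain s2 where
    "(ynotgcv ^^ k) t s2" "ygcv s2 s1" by blast
  ultimately show ?case by (blast intro: relpowp_Suc_I2)
qed

end
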